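(* Let $n\ge2$, $\omega\in\mathbb{R}^n$, $k\in\mathbb{R}_{>0}^n$ satisfy (IC1) $\sum_\mu\omega_\mu=0$, (IC2) $\omega\ne0$, (IC3) $\left|\frac{\omega_1}{k_1}\right|\le\cdots\le\left|\frac{\omega_n}{k_n}\right|$. Define $$g(R)=\prod_{\sigma\in\{-1,+1\}^n}\left(-R+\frac1n\sum_{\mu=1}^n\sigma_\mu\sqrt{k_\mu^2R-\omega_\mu^2}\right).$$ Then $g$ is a polynomial in $R$ of degree $2^n$, and there exists a polynomial $h(R)$ of degree $2^n-2$ with $g(R)=R^2\,h(R)$.
   Context: Here $R$ may be complex; for each $\mu$ any fixed choice of square root of $k_\mu^2R-\omega_\mu^2$ may be used, since the product runs over all sign choices and is therefore independent of the choice of branches. *)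

theory Defs
  imports "HOL-Analysis.Analysis" "HOL-Computational_Algebra.Polynomial"
begin

text \<open>Indices are 0,...,n-1 (the paper uses 1,...,n).
  The square root is the principal branch csqrt; the product is independent of the branch.\<close>

definition sign_vectors :: "nat \<Rightarrow> (nat \<Rightarrow> real) set" where
  "sign_vectors n = PiE {0..<n} (\<lambda>_. {-1, 1})"

definition gfun :: "nat \<Rightarrow> (nat \<Rightarrow> real) \<Rightarrow> (nat \<Rightarrow> real) \<Rightarrow> complex \<Rightarrow> complex" where
  "gfun n \<omega> k R = (\<Prod>\<sigma>\<in>sign_vectors n.
      - R + (1 / of_nat n) * (\<Sum>\<mu><n. of_real (\<sigma> \<mu>) *
         csqrt (of_real ((k \<mu>)\<^sup>2) * R - of_real ((\<omega> \<mu>)\<^sup>2))))"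

end

theory Submission
  imports Defs
begin

text \<open>Flipping the sign of one square root only permutes the factors of \<open>g\<close>, so \<open>g\<close> is a
  polynomial in \<open>R\<close> and the squares \<open>k\<^sub>\<mu>\<^sup>2 R - \<omega>\<^sub>\<mu>\<^sup>2\<close>, hence in \<open>R\<close> alone; for the same
  reason it does not depend on the choice of the square roots. Its degree is \<open>2^n\<close> because
  \<open>x^(2^n) g(1/x)\<close> tends to \<open>\<Prod>\<^sub>\<sigma> (-1) = 1\<close> as \<open>x \<rightarrow> 0\<^sup>+\<close>.
  For the factor \<open>R\<^sup>2\<close>, choose near \<open>R = 0\<close> the roots close to \<open>\<i> \<omega>\<^sub>\<mu>\<close>. Since
  \<open>\<Sum> \<omega>\<^sub>\<mu> = 0\<close>, the two constant sign vectors give factors of size \<open>O(|R|)\<close>. If some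
  \<open>\<omega>\<^sub>\<mu>\<close> vanishes, its root \<open>\<surd>(k\<^sub>\<mu>\<^sup>2 R)\<close> is only \<open>O(\<surd>|R|)\<close>, but then the four sign vectors
  that are constant away from that index give factors of size \<open>O(\<surd>|R|)\<close>. Either way
  \<open>g(R) = O(|R|\<^sup>2)\<close>.\<close>

section \<open>Polynomial functions of several variables\<close>

inductive mpoly_fun :: "((nat \<Rightarrow> complex) \<Rightarrow> complex) \<Rightarrow> bool" where
  mpoly_fun_const: "mpoly_fun (\<lambda>v. c)"
| mpoly_fun_var: "mpoly_fun (\<lambda>v. v i)"
| mpoly_fun_add: "mpoly_fun f \<Longrightarrow> mpoly_fun g \<Longrightarrow> mpoly_fun (\<lambda>v. f v + g v)"
| mpoly_fun_mult: "mpoly_fun f \<Longrightarrow> mpoly_fun g \<Longrightarrow> mpoly_fun (\<lambda>v. f v * g v)"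

lemma mpoly_fun_subst:
  assumes "mpoly_fun f" and "\<And>i. mpoly_fun (g i)"
  shows "mpoly_fun (\<lambda>v. f (\<lambda>i. g i v))"
  using assms(1) by induction (use assms(2) in \<open>auto intro: mpoly_fun.intros\<close>)

lemma mpoly_fun_diff: "mpoly_fun f \<Longrightarrow> mpoly_fun g \<Longrightarrow> mpoly_fun (\<lambda>v. f v - g v)"
  using mpoly_fun_add[OF _ mpoly_fun_mult[OF mpoly_fun_const[of "-1"]], of f g] by simp

lemma mpoly_fun_poly_compose:
  assumes "mpoly_fun f"
  shows "\<exists>p. \<forall>R. f (\<lambda>i. poly (q i) R) = poly p R"
  using assms
proof induction
  case (mpoly_fun_const c)
  show ?case by (rule exI[of _ "[:c:]"]) simp
next
  case (mpoly_fun_var i)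
  show ?case by (rule exI[of _ "q i"]) simp
next
  case (mpoly_fun_add f g)
  then obtain p p' where "\<forall>R. f (\<lambda>i. poly (q i) R) = poly p R" "\<forall>R. g (\<lambda>i. poly (q i) R) = poly p' R"
    by blast
  then show ?case by (intro exI[of _ "p + p'"]) simp
next
  case (mpoly_fun_mult f g)
  then obtain p p' where "\<forall>R. f (\<lambda>i. poly (q i) R) = poly p R" "\<forall>R. g (\<lambda>i. poly (q i) R) = poly p' R"
    by blast
  then show ?case by (intro exI[of _ "p * p'"]) simp
qed

text \<open>In \<open>case_nat (s\<^sup>2) v\<close> the value \<open>s\<^sup>2\<close> becomes the new variable 0 and the old
  variables are shifted up by one.\<close>

lemma mpoly_fun_shift_decompose:
  assumes "mpoly_fun f"
  shows "\<exists>E Od. mpoly_fun E \<and> mpoly_fun Od \<and>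
    (\<forall>v s. f (v(0 := v 0 + s)) = E (case_nat (s\<^sup>2) v) + s * Od (case_nat (s\<^sup>2) v))"
  using assms
proof induction
  case (mpoly_fun_const c)
  show ?case
    by (intro exI[of _ "\<lambda>w. c"] exI[of _ "\<lambda>w. 0"]) (simp add: mpoly_fun.intros)
next
  case (mpoly_fun_var i)
  show ?case
  proof (cases i)
    case 0
    then show ?thesis
      by (intro exI[of _ "\<lambda>w. w 1"] exI[of _ "\<lambda>w. 1"]) (simp add: mpoly_fun.intros)
  next
    case Suc
    then show ?thesis
      by (intro exI[of _ "\<lambda>w. w (Suc i)"] exI[of _ "\<lambda>w. 0"]) (simp add: mpoly_fun.intros)
  qed
next
  case (mpoly_fun_add f g)
  then obtain E1 Od1 E2 Od2 where "mpoly_fun E1" "mpoly_fun Od1" "mpoly_fun E2" "mpoly_fun Od2"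
    and f: "\<And>v s. f (v(0 := v 0 + s)) = E1 (case_nat (s\<^sup>2) v) + s * Od1 (case_nat (s\<^sup>2) v)"
    and g: "\<And>v s. g (v(0 := v 0 + s)) = E2 (case_nat (s\<^sup>2) v) + s * Od2 (case_nat (s\<^sup>2) v)"
    by metis
  then show ?case
    by (intro exI[of _ "\<lambda>w. E1 w + E2 w"] exI[of _ "\<lambda>w. Od1 w + Od2 w"] conjI allI
        mpoly_fun.intros, simp_all only: f g) (simp add: algebra_simps)
next
  case (mpoly_fun_mult f g)
  then obtain E1 Od1 E2 Od2 where "mpoly_fun E1" "mpoly_fun Od1" "mpoly_fun E2" "mpoly_fun Od2"
    and f: "\<And>v s. f (v(0 := v 0 + s)) = E1 (case_nat (s\<^sup>2) v) + s * Od1 (case_nat (s\<^sup>2) v)"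
    and g: "\<And>v s. g (v(0 := v 0 + s)) = E2 (case_nat (s\<^sup>2) v) + s * Od2 (case_nat (s\<^sup>2) v)"
    by metis
  then show ?case
    by (intro exI[of _ "\<lambda>w. E1 w * E2 w + w 0 * Od1 w * Od2 w"]
        exI[of _ "\<lambda>w. E1 w * Od2 w + Od1 w * E2 w"] conjI allI mpoly_fun.intros,
        simp_all only: f g) (simp add: power2_eq_square algebra_simps)
qed

lemma mpoly_fun_shift_product:
  assumes "mpoly_fun f"
  shows "\<exists>h. mpoly_fun h \<and> (\<forall>v s. f (v(0 := v 0 + s)) * f (v(0 := v 0 - s)) = h (case_nat (s\<^sup>2) v))"
proof -
  obtain E Od where "mpoly_fun E" "mpoly_fun Od"
    and EO: "\<And>v s. f (v(0 := v 0 + s)) = E (case_nat (s\<^sup>2) v) + s * Od (case_nat (s\<^sup>2) v)"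
    using mpoly_fun_shift_decompose[OF assms] by metis
  have minus: "f (v(0 := v 0 - s)) = E (case_nat (s\<^sup>2) v) - s * Od (case_nat (s\<^sup>2) v)" for v s
    using EO[of v "-s"] by simp
  have "f (v(0 := v 0 + s)) * f (v(0 := v 0 - s)) =
      (\<lambda>w. E w * E w - w 0 * (Od w * Od w)) (case_nat (s\<^sup>2) v)" for v s
    by (simp only: EO minus) (simp add: algebra_simps power2_eq_square)
  moreover have "mpoly_fun (\<lambda>w. E w * E w - w 0 * (Od w * Od w))"
    using \<open>mpoly_fun E\<close> \<open>mpoly_fun Od\<close> by (intro mpoly_fun_diff mpoly_fun.intros)
  ultimately show ?thesis by blast
qed

section \<open>Products over sign vectors\<close>

lemma finite_sign_vectors: "finite (sign_vectors n)"
  unfolding sign_vectors_def by (simp add: finite_PiE)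

lemma card_sign_vectors: "card (sign_vectors n) = 2 ^ n"
  unfolding sign_vectors_def by (simp add: card_PiE numeral_2_eq_2)

lemma sign_vectors_abs: "\<sigma> \<in> sign_vectors n \<Longrightarrow> \<mu> < n \<Longrightarrow> \<bar>\<sigma> \<mu>\<bar> = 1"
  unfolding sign_vectors_def by (force simp: PiE_iff)

lemma prod_sign_vectors_Suc:
  "(\<Prod>\<sigma>\<in>sign_vectors (Suc m). F \<sigma>) = (\<Prod>\<sigma>\<in>sign_vectors m. F (\<sigma>(m := 1)) * F (\<sigma>(m := -1)))"
proof -
  have split: "sign_vectors (Suc m) = (\<lambda>(c, \<sigma>). \<sigma>(m := c)) ` ({-1, 1} \<times> sign_vectors m)"
    unfolding sign_vectors_def by (simp add: atLeast0_lessThan_Suc PiE_insert_eq)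
  have inj: "inj_on (\<lambda>(c, \<sigma>). \<sigma>(m := c)) ({-1, 1} \<times> sign_vectors m)"
    unfolding sign_vectors_def using inj_combinator[of m "{0..<m}" "\<lambda>_. {-1, 1::real}"] by simp
  have "(\<Prod>\<sigma>\<in>sign_vectors (Suc m). F \<sigma>) = (\<Prod>c\<in>{-1, 1}. \<Prod>\<sigma>\<in>sign_vectors m. F (\<sigma>(m := c)))"
    unfolding split prod.reindex[OF inj] by (simp add: prod.cartesian_product case_prod_beta)
  also have "\<dots> = (\<Prod>\<sigma>\<in>sign_vectors m. \<Prod>c\<in>{-1, 1}. F (\<sigma>(m := c)))"
    by (rule prod.swap)
  finally show ?thesis by (simp add: mult.commute)
qed

definition sign_prod :: "nat \<Rightarrow> complex \<Rightarrow> (nat \<Rightarrow> complex) \<Rightarrow> complex" where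
  "sign_prod m X t = (\<Prod>\<sigma>\<in>sign_vectors m. X + (\<Sum>\<mu><m. of_real (\<sigma> \<mu>) * t \<mu>))"

lemma sign_prod_0 [simp]: "sign_prod 0 X t = X"
  by (simp add: sign_prod_def sign_vectors_def)

lemma sign_prod_Suc: "sign_prod (Suc m) X t = sign_prod m (X + t m) t * sign_prod m (X - t m) t"
  unfolding sign_prod_def prod_sign_vectors_Suc prod.distrib[symmetric]
  by (simp add: lessThan_Suc algebra_simps)

lemma sign_prod_mpoly_fun:
  "\<exists>f. mpoly_fun f \<and> (\<forall>v t. (\<forall>\<mu><m. (t \<mu>)\<^sup>2 = v (Suc \<mu>)) \<longrightarrow> sign_prod m (v 0) t = f v)"
proof (induction m)
  case 0
  show ?case by (intro exI[of _ "\<lambda>v. v 0"]) (simp add: mpoly_fun_var)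
next
  case (Suc m)
  then obtain f where "mpoly_fun f"
    and f: "\<And>v t. \<forall>\<mu><m. (t \<mu>)\<^sup>2 = v (Suc \<mu>) \<Longrightarrow> sign_prod m (v 0) t = f v"
    by blast
  obtain h where "mpoly_fun h"
    and h: "\<And>v s. f (v(0 := v 0 + s)) * f (v(0 := v 0 - s)) = h (case_nat (s\<^sup>2) v)"
    using mpoly_fun_shift_product[OF \<open>mpoly_fun f\<close>] by blast
  have "mpoly_fun (\<lambda>v. h (\<lambda>i. case_nat (v (Suc m)) v i))"
  proof (rule mpoly_fun_subst[OF \<open>mpoly_fun h\<close>])
    show "mpoly_fun (\<lambda>v. case_nat (v (Suc m)) v i)" for i
      by (cases i) (simp_all add: mpoly_fun_var)
  qed
  moreover have "sign_prod (Suc m) (v 0) t = h (case_nat (v (Suc m)) v)"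
    if squares: "\<forall>\<mu><Suc m. (t \<mu>)\<^sup>2 = v (Suc \<mu>)" for v t
  proof -
    have "sign_prod m Y t = f (v(0 := Y))" for Y
      using f[of t "v(0 := Y)"] squares by simp
    then have "sign_prod (Suc m) (v 0) t = f (v(0 := v 0 + t m)) * f (v(0 := v 0 - t m))"
      by (simp add: sign_prod_Suc)
    also have "\<dots> = h (case_nat (v (Suc m)) v)"
      using squares by (simp add: h)
    finally show ?thesis .
  qed
  ultimately show ?case by blast
qed

corollary sign_prod_cong_squares:
  assumes "\<And>\<mu>. \<mu> < m \<Longrightarrow> (t \<mu>)\<^sup>2 = (s \<mu>)\<^sup>2"
  shows "sign_prod m X t = sign_prod m X s"
proof -
  obtain f where f: "\<And>v t. \<forall>\<mu><m. (t \<mu>)\<^sup>2 = v (Suc \<mu>) \<Longrightarrow> sign_prod m (v 0) t = f v"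
    using sign_prod_mpoly_fun by blast
  show ?thesis
    using f[of t "case_nat X (\<lambda>\<mu>. (s \<mu>)\<^sup>2)"] f[of s "case_nat X (\<lambda>\<mu>. (s \<mu>)\<^sup>2)"] assms
    by simp
qed

lemma gfun_eq_sign_prod:
  assumes "\<And>\<mu>. \<mu> < n \<Longrightarrow> (t \<mu>)\<^sup>2 = of_real ((k \<mu>)\<^sup>2) * R - of_real ((\<omega> \<mu>)\<^sup>2)"
  shows "gfun n \<omega> k R = sign_prod n (- R) (\<lambda>\<mu>. t \<mu> / of_nat n)"
proof -
  have "gfun n \<omega> k R =
      sign_prod n (- R) (\<lambda>\<mu>. csqrt (of_real ((k \<mu>)\<^sup>2) * R - of_real ((\<omega> \<mu>)\<^sup>2)) / of_nat n)"
    unfolding gfun_def sign_prod_def by (simp add: sum_distrib_left algebra_simps)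
  also have "\<dots> = sign_prod n (- R) (\<lambda>\<mu>. t \<mu> / of_nat n)"
    by (rule sign_prod_cong_squares) (simp add: assms power_divide)
  finally show ?thesis .
qed

lemma gfun_polynomial: "\<exists>p. \<forall>R. gfun n \<omega> k R = poly p R"
proof -
  obtain f where "mpoly_fun f"
    and f: "\<And>v t. \<forall>\<mu><n. (t \<mu>)\<^sup>2 = v (Suc \<mu>) \<Longrightarrow> sign_prod n (v 0) t = f v"
    using sign_prod_mpoly_fun by blast
  define q :: "nat \<Rightarrow> complex poly" where "q = case_nat [:0, -1:]
    (\<lambda>\<mu>. [:- of_real ((\<omega> \<mu>)\<^sup>2), of_real ((k \<mu>)\<^sup>2):] * [:inverse ((of_nat n)\<^sup>2):])"
  obtain p where p: "\<And>R. f (\<lambda>i. poly (q i) R) = poly p R"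
    using mpoly_fun_poly_compose[OF \<open>mpoly_fun f\<close>] by blast
  have "gfun n \<omega> k R = poly p R" for R
  proof -
    define t where "t = (\<lambda>\<mu>. csqrt (of_real ((k \<mu>)\<^sup>2) * R - of_real ((\<omega> \<mu>)\<^sup>2)) / of_nat n)"
    have "gfun n \<omega> k R = sign_prod n (- R) t"
      unfolding t_def by (rule gfun_eq_sign_prod) simp
    also have "\<dots> = f (\<lambda>i. poly (q i) R)"
      using f[of t "\<lambda>i. poly (q i) R"]
      by (simp add: q_def t_def power_divide divide_inverse power_inverse algebra_simps)
    finally show ?thesis by (simp add: p)
  qed
  then show ?thesis by blast
qed

section \<open>Degree\<close>

lemma tendsto_power_degree_mult_poly_inverse:
  fixes p :: "complex poly"
  shows "((\<lambda>x::real. of_real x ^ degree p * poly p (of_real (1 / x))) \<longlongrightarrow> lead_coeff p) (at_right 0)"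
proof -
  have "((\<lambda>x::real. poly (reflect_poly p) (of_real x)) \<longlongrightarrow> poly (reflect_poly p) 0) (at_right 0)"
    by (intro tendsto_eq_intros) auto
  moreover have "eventually (\<lambda>x::real. poly (reflect_poly p) (of_real x) =
      of_real x ^ degree p * poly p (of_real (1 / x))) (at_right 0)"
    using eventually_at_right_less[of 0]
    by eventually_elim (simp add: poly_reflect_poly_nz of_real_inverse divide_inverse)
  ultimately show ?thesis
    by (simp add: poly_0_coeff_0 Lim_transform_eventually)
qed

lemma degree_eq_of_tendsto:
  fixes p :: "complex poly"
  assumes lim: "((\<lambda>x::real. of_real x ^ N * poly p (of_real (1 / x))) \<longlongrightarrow> c) (at_right 0)"
    and "c \<noteq> 0"
  shows "degree p = N"
proof -
  let ?f = "\<lambda>j (x::real). of_real x ^ j * poly p (of_real (1 / x))"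
  have lead: "(?f (degree p) \<longlongrightarrow> lead_coeff p) (at_right 0)"
    by (rule tendsto_power_degree_mult_poly_inverse)
  have shift: "(?f (i + j) \<longlongrightarrow> 0) (at_right 0)" if j: "(?f j \<longlongrightarrow> a) (at_right 0)" and "i > 0"
    for i j a
  proof -
    have "((\<lambda>x::real. (of_real x :: complex) ^ i) \<longlongrightarrow> of_real 0 ^ i) (at_right 0)"
      by (intro tendsto_intros)
    then have "((\<lambda>x::real. (of_real x :: complex) ^ i) \<longlongrightarrow> 0) (at_right 0)"
      using \<open>i > 0\<close> by (simp add: zero_power)
    from tendsto_mult[OF this j] show ?thesis
      by (simp only: power_add mult.assoc mult_zero_left)
  qed
  show ?thesis
  proof (cases "degree p" N rule: linorder_cases)
    case less
    then have "(?f N \<longlongrightarrow> 0) (at_right 0)"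
      using shift[OF lead, of "N - degree p"] by simp
    with \<open>c \<noteq> 0\<close> show ?thesis using tendsto_unique[OF trivial_limit_at_right_real lim] by simp
  next
    case greater
    then have "(?f (degree p) \<longlongrightarrow> 0) (at_right 0)"
      using shift[OF lim, of "degree p - N"] by simp
    then have "lead_coeff p = 0" by (rule tendsto_unique[OF trivial_limit_at_right_real lead])
    with greater show ?thesis by simp
  qed
qed

lemma tendsto_mult_csqrt_at_right_0:
  "((\<lambda>x::real. of_real x * csqrt (of_real (a / x - b))) \<longlongrightarrow> 0) (at_right 0)"
proof -
  have "((\<lambda>x. sqrt \<bar>a * x - b * x\<^sup>2\<bar>) \<longlongrightarrow> sqrt \<bar>a * 0 - b * 0\<^sup>2\<bar>) (at_right 0)"
    by (intro tendsto_intros)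
  then have "((\<lambda>x. sqrt \<bar>a * x - b * x\<^sup>2\<bar>) \<longlongrightarrow> 0) (at_right 0)"
    by simp
  moreover have "eventually (\<lambda>x. sqrt \<bar>a * x - b * x\<^sup>2\<bar> = norm (of_real x * csqrt (of_real (a / x - b))))
      (at_right 0)"
    using eventually_at_right_less[of 0]
  proof eventually_elim
    case (elim x)
    have "a * x - b * x\<^sup>2 = x\<^sup>2 * (a / x - b)"
      using elim by (simp add: power2_eq_square field_simps)
    then have "\<bar>a * x - b * x\<^sup>2\<bar> = x\<^sup>2 * \<bar>a / x - b\<bar>"
      by (simp add: abs_mult)
    then show ?case
      using elim by (simp only: norm_mult norm_csqrt norm_of_real) (simp add: real_sqrt_mult)
  qed
  ultimately show ?thesis
    by (rule tendsto_norm_zero_cancel[OF Lim_transform_eventually])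
qed

lemma gfun_asymptotics:
  assumes "n \<ge> 1"
  shows "((\<lambda>x::real. of_real x ^ 2 ^ n * gfun n \<omega> k (of_real (1 / x))) \<longlongrightarrow> 1) (at_right 0)"
proof -
  define r where "r = (\<lambda>\<mu> (x::real). of_real x * csqrt (of_real ((k \<mu>)\<^sup>2 / x - (\<omega> \<mu>)\<^sup>2)))"
  let ?H = "\<lambda>x. \<Prod>\<sigma>\<in>sign_vectors n. - 1 + 1 / of_nat n * (\<Sum>\<mu><n. of_real (\<sigma> \<mu>) * r \<mu> x)"
  have "(?H \<longlongrightarrow> (\<Prod>\<sigma>\<in>sign_vectors n. - 1 + 1 / of_nat n * (\<Sum>\<mu><n. of_real (\<sigma> \<mu>) * 0))) (at_right 0)"
    unfolding r_def by (intro tendsto_intros tendsto_mult_csqrt_at_right_0)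
  then have "(?H \<longlongrightarrow> 1) (at_right 0)"
    using assms by (simp add: card_sign_vectors power_minus_even)
  moreover have "eventually (\<lambda>x. ?H x = of_real x ^ 2 ^ n * gfun n \<omega> k (of_real (1 / x))) (at_right 0)"
    using eventually_at_right_less[of 0]
  proof eventually_elim
    case (elim x)
    have "of_real x ^ 2 ^ n * gfun n \<omega> k (of_real (1 / x)) =
        (\<Prod>\<sigma>\<in>sign_vectors n. of_real x * (- of_real (1 / x) + 1 / of_nat n *
          (\<Sum>\<mu><n. of_real (\<sigma> \<mu>) * csqrt (of_real ((k \<mu>)\<^sup>2 / x - (\<omega> \<mu>)\<^sup>2)))))"
      by (simp add: gfun_def prod.distrib card_sign_vectors divide_inverse)
    also have "\<dots> = ?H x"
      using elim by (intro prod.cong refl) (simp add: r_def field_simps sum_distrib_left)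
    finally show ?case ..
  qed
  ultimately show ?thesis by (rule Lim_transform_eventually)
qed

section \<open>Vanishing to second order at zero\<close>

lemma monom_power_dvd_of_norm_bound:
  fixes p :: "complex poly"
  assumes "\<And>R. 0 < norm R \<Longrightarrow> norm R \<le> 1 \<Longrightarrow> norm (poly p R) \<le> C * norm R ^ j"
  shows "[:0, 1:] ^ j dvd p"
  using assms
proof (induction j arbitrary: p)
  case 0
  show ?case by simp
next
  case (Suc j)
  have "(poly p \<longlongrightarrow> 0) (at 0)"
  proof (rule Lim_null_comparison)
    show "eventually (\<lambda>R. norm (poly p R) \<le> C * norm R ^ Suc j) (at 0)"
      unfolding eventually_at by (intro exI[of _ 1]) (auto simp del: power_Suc intro!: Suc.prems)
    have "((\<lambda>R::complex. C * norm R ^ Suc j) \<longlongrightarrow> C * norm (0::complex) ^ Suc j) (at 0)"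
      by (intro tendsto_intros)
    then show "((\<lambda>R::complex. C * norm R ^ Suc j) \<longlongrightarrow> 0) (at 0)" by simp
  qed
  moreover have "(poly p \<longlongrightarrow> poly p 0) (at 0)"
    by (intro tendsto_intros)
  ultimately have "poly p 0 = 0"
    using tendsto_unique[OF trivial_limit_at] by blast
  then obtain q where p: "p = [:0, 1:] * q"
    using poly_eq_0_iff_dvd[of p 0] by (auto elim: dvdE)
  have "norm (poly q R) \<le> C * norm R ^ j" if "0 < norm R" "norm R \<le> 1" for R
  proof -
    have "norm R * norm (poly q R) \<le> norm R * (C * norm R ^ j)"
      using Suc.prems[OF that] by (simp add: p norm_mult algebra_simps)
    then show ?thesis using \<open>0 < norm R\<close> by simp
  qed
  then have "[:0, 1:] ^ j dvd q" by (rule Suc.IH)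
  then show ?case unfolding p power_Suc by (rule mult_dvd_mono[OF dvd_refl])
qed

lemma norm_csqrt_minus_one_le: "norm (csqrt z - 1) \<le> norm (z - 1)"
proof -
  have "1 \<le> Re (csqrt z + 1)" using Re_csqrt[of z] by simp
  also have "\<dots> \<le> norm (csqrt z + 1)" by (rule complex_Re_le_cmod)
  finally have "norm (csqrt z - 1) \<le> norm (csqrt z - 1) * norm (csqrt z + 1)"
    by (simp add: mult_le_cancel_left1)
  also have "\<dots> = norm (z - 1)"
    by (simp add: norm_mult[symmetric] algebra_simps power2_eq_square[symmetric])
  finally show ?thesis .
qed

text \<open>A square root of \<open>\<kappa>\<^sup>2 R - w\<^sup>2\<close> that stays close to \<open>\<i> w\<close> for small \<open>R\<close>, unlike the
  principal branch, which jumps across its cut when \<open>w \<noteq> 0\<close>.\<close>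

definition root_branch :: "real \<Rightarrow> real \<Rightarrow> complex \<Rightarrow> complex" where
  "root_branch \<kappa> w R = (if w = 0 then csqrt (of_real (\<kappa>\<^sup>2) * R)
     else \<i> * of_real w * csqrt (1 - of_real (\<kappa>\<^sup>2) * R / of_real (w\<^sup>2)))"

lemma root_branch_squared: "(root_branch \<kappa> w R)\<^sup>2 = of_real (\<kappa>\<^sup>2) * R - of_real (w\<^sup>2)"
  by (simp add: root_branch_def power_mult_distrib field_simps)

lemma norm_root_branch_diff_le_linear:
  assumes "w \<noteq> 0"
  shows "norm (root_branch \<kappa> w R - \<i> * of_real w) \<le> \<kappa>\<^sup>2 / \<bar>w\<bar> * norm R"
proof -
  define z where "z = 1 - of_real (\<kappa>\<^sup>2) * R / of_real (w\<^sup>2)"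
  have "root_branch \<kappa> w R - \<i> * of_real w = \<i> * of_real w * (csqrt z - 1)"
    using assms by (simp add: root_branch_def z_def right_diff_distrib)
  then have "norm (root_branch \<kappa> w R - \<i> * of_real w) = \<bar>w\<bar> * norm (csqrt z - 1)"
    by (simp add: norm_mult)
  also have "\<dots> \<le> \<bar>w\<bar> * norm (z - 1)"
    by (intro mult_left_mono norm_csqrt_minus_one_le) auto
  also have "norm (z - 1) = \<kappa>\<^sup>2 * norm R / w\<^sup>2"
    by (simp add: z_def norm_mult norm_divide norm_power)
  also have "\<bar>w\<bar> * (\<kappa>\<^sup>2 * norm R / w\<^sup>2) = \<kappa>\<^sup>2 / \<bar>w\<bar> * norm R"
    using assms by (simp add: power2_eq_square field_simps)
  finally show ?thesis .
qed

lemma norm_root_branch_diff_le: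
  "norm (root_branch \<kappa> w R - \<i> * of_real w) \<le> \<bar>\<kappa>\<bar> * sqrt (norm R) + \<kappa>\<^sup>2 / \<bar>w\<bar> * norm R"
proof (cases "w = 0")
  case True
  then show ?thesis
    by (simp add: root_branch_def norm_mult norm_power real_sqrt_mult)
next
  case False
  then show ?thesis
    using norm_root_branch_diff_le_linear[of w \<kappa> R] by (intro add_increasing[rotated]) auto
qed

lemma norm_add_signed_mean_le:
  fixes x c :: "nat \<Rightarrow> complex"
  assumes "\<sigma> \<in> sign_vectors n" and "n \<ge> 1" and "(\<Sum>\<mu><n. of_real (\<sigma> \<mu>) * c \<mu>) = 0"
  shows "norm (X + (\<Sum>\<mu><n. of_real (\<sigma> \<mu>) * (x \<mu> / of_nat n))) \<le> norm X + (\<Sum>\<mu><n. norm (x \<mu> - c \<mu>))"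
proof -
  have "(\<Sum>\<mu><n. of_real (\<sigma> \<mu>) * (x \<mu> / of_nat n)) =
      (\<Sum>\<mu><n. of_real (\<sigma> \<mu>) * ((x \<mu> - c \<mu>) / of_nat n) + of_real (\<sigma> \<mu>) * c \<mu> / of_nat n)"
    by (rule sum.cong) (simp_all add: diff_divide_distrib right_diff_distrib)
  also have "\<dots> = (\<Sum>\<mu><n. of_real (\<sigma> \<mu>) * ((x \<mu> - c \<mu>) / of_nat n)) +
      (\<Sum>\<mu><n. of_real (\<sigma> \<mu>) * c \<mu>) / of_nat n"
    by (simp only: sum.distrib sum_divide_distrib)
  also have "\<dots> = (\<Sum>\<mu><n. of_real (\<sigma> \<mu>) * ((x \<mu> - c \<mu>) / of_nat n))"
    using assms(3) by simp
  finally have recentre: "(\<Sum>\<mu><n. of_real (\<sigma> \<mu>) * (x \<mu> / of_nat n)) =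
      (\<Sum>\<mu><n. of_real (\<sigma> \<mu>) * ((x \<mu> - c \<mu>) / of_nat n))" .
  have "norm (X + (\<Sum>\<mu><n. of_real (\<sigma> \<mu>) * (x \<mu> / of_nat n))) \<le>
      norm X + norm (\<Sum>\<mu><n. of_real (\<sigma> \<mu>) * ((x \<mu> - c \<mu>) / of_nat n))"
    unfolding recentre by (rule norm_triangle_ineq)
  also have "\<dots> \<le> norm X + (\<Sum>\<mu><n. norm (of_real (\<sigma> \<mu>) * ((x \<mu> - c \<mu>) / of_nat n)))"
    by (intro add_left_mono norm_sum)
  also have "(\<Sum>\<mu><n. norm (of_real (\<sigma> \<mu>) * ((x \<mu> - c \<mu>) / of_nat n))) \<le> (\<Sum>\<mu><n. norm (x \<mu> - c \<mu>))"
  proof (rule sum_mono)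
    fix \<mu> assume "\<mu> \<in> {..<n}"
    then have "\<bar>\<sigma> \<mu>\<bar> = 1" using sign_vectors_abs assms(1) by auto
    then show "norm (of_real (\<sigma> \<mu>) * ((x \<mu> - c \<mu>) / of_nat n)) \<le> norm (x \<mu> - c \<mu>)"
      using assms(2) by (simp add: norm_mult norm_divide divide_le_eq mult_le_cancel_left1)
  qed
  finally show ?thesis by simp
qed

lemma norm_prod_le_subset:
  fixes F :: "'a \<Rightarrow> 'b::real_normed_field"
  assumes "finite S" "T \<subseteq> S" "\<And>x. x \<in> S \<Longrightarrow> norm (F x) \<le> B" "\<And>x. x \<in> T \<Longrightarrow> norm (F x) \<le> e"
  shows "norm (prod F S) \<le> e ^ card T * B ^ card (S - T)"
proof -
  have "norm (prod F S) = (\<Prod>x\<in>S. norm (F x))"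
    by (simp add: prod_norm)
  also have "\<dots> = (\<Prod>x\<in>T. norm (F x)) * (\<Prod>x\<in>S - T. norm (F x))"
    using prod.subset_diff[OF assms(2,1)] by (simp add: mult.commute)
  also have "\<dots> \<le> (\<Prod>x\<in>T. e) * (\<Prod>x\<in>S - T. B)"
    using assms by (intro mult_mono prod_mono prod_nonneg) (auto intro: order_trans[OF norm_ge_zero])
  finally show ?thesis by simp
qed

lemma norm_root_branch_le:
  assumes "norm R \<le> 1"
  shows "norm (root_branch \<kappa> w R) \<le> \<bar>\<kappa>\<bar> + \<kappa>\<^sup>2 / \<bar>w\<bar> + \<bar>w\<bar>"
proof -
  have "norm (root_branch \<kappa> w R) \<le> norm (root_branch \<kappa> w R - \<i> * of_real w) + \<bar>w\<bar>"
    using norm_triangle_ineq[of "root_branch \<kappa> w R - \<i> * of_real w" "\<i> * of_real w"]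
    by (simp add: norm_mult)
  also have "\<dots> \<le> \<bar>\<kappa>\<bar> * sqrt (norm R) + \<kappa>\<^sup>2 / \<bar>w\<bar> * norm R + \<bar>w\<bar>"
    using norm_root_branch_diff_le by (rule add_right_mono)
  also have "\<dots> \<le> \<bar>\<kappa>\<bar> * 1 + \<kappa>\<^sup>2 / \<bar>w\<bar> * 1 + \<bar>w\<bar>"
    using assms by (intro add_mono mult_left_mono order_refl) auto
  finally show ?thesis by simp
qed

definition branch_factor ::
    "nat \<Rightarrow> (nat \<Rightarrow> real) \<Rightarrow> (nat \<Rightarrow> real) \<Rightarrow> (nat \<Rightarrow> real) \<Rightarrow> complex \<Rightarrow> complex" where
  "branch_factor n \<omega> k \<sigma> R = - R + (\<Sum>\<mu><n. of_real (\<sigma> \<mu>) * (root_branch (k \<mu>) (\<omega> \<mu>) R / of_nat n))"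

lemma gfun_eq_prod_branch_factor: "gfun n \<omega> k R = (\<Prod>\<sigma>\<in>sign_vectors n. branch_factor n \<omega> k \<sigma> R)"
  using gfun_eq_sign_prod[of n "\<lambda>\<mu>. root_branch (k \<mu>) (\<omega> \<mu>) R"]
  by (simp add: root_branch_squared sign_prod_def branch_factor_def)

lemma norm_branch_factor_le_balanced:
  assumes "\<sigma> \<in> sign_vectors n" "n \<ge> 1" "(\<Sum>\<mu><n. \<omega> \<mu>) = 0"
    and "\<And>\<mu>. \<mu> < n \<Longrightarrow> \<omega> \<mu> \<noteq> 0 \<Longrightarrow> \<sigma> \<mu> = c"
  shows "norm (branch_factor n \<omega> k \<sigma> R) \<le>
    norm R + (\<Sum>\<mu><n. norm (root_branch (k \<mu>) (\<omega> \<mu>) R - \<i> * of_real (\<omega> \<mu>)))"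
proof -
  have "(\<Sum>\<mu><n. of_real (\<sigma> \<mu>) * (\<i> * of_real (\<omega> \<mu>))) = (\<Sum>\<mu><n. \<i> * of_real c * of_real (\<omega> \<mu>))"
    using assms(4) by (intro sum.cong) (auto simp: mult.left_commute)
  also have "\<dots> = 0"
    using assms(3) by (simp flip: sum_distrib_left of_real_sum)
  finally have "norm (- R + (\<Sum>\<mu><n. of_real (\<sigma> \<mu>) * (root_branch (k \<mu>) (\<omega> \<mu>) R / of_nat n))) \<le>
      norm (- R) + (\<Sum>\<mu><n. norm (root_branch (k \<mu>) (\<omega> \<mu>) R - \<i> * of_real (\<omega> \<mu>)))"
    by (rule norm_add_signed_mean_le[OF assms(1,2)])
  then show ?thesis
    unfolding branch_factor_def by simp
qed

lemma norm_gfun_le_of_factor_bounds: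
  assumes "n \<ge> 1"
  obtains B where "\<And>T R e. T \<subseteq> sign_vectors n \<Longrightarrow> norm R \<le> 1 \<Longrightarrow> 0 \<le> e \<Longrightarrow>
    (\<And>\<sigma>. \<sigma> \<in> T \<Longrightarrow> norm (branch_factor n \<omega> k \<sigma> R) \<le> e) \<Longrightarrow>
    norm (gfun n \<omega> k R) \<le> e ^ card T * B"
proof -
  define B where "B = 1 + (\<Sum>\<mu><n. \<bar>k \<mu>\<bar> + (k \<mu>)\<^sup>2 / \<bar>\<omega> \<mu>\<bar> + \<bar>\<omega> \<mu>\<bar>)"
  have "1 \<le> B" unfolding B_def by (intro le_add_same_cancel1[THEN iffD2] sum_nonneg) auto
  show thesis
  proof (rule that[of "B ^ 2 ^ n"])
  fix T R and e :: real
  assume T: "T \<subseteq> sign_vectors n" and "norm R \<le> 1" "0 \<le> e"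
    and small: "\<And>\<sigma>. \<sigma> \<in> T \<Longrightarrow> norm (branch_factor n \<omega> k \<sigma> R) \<le> e"
  have bounded: "norm (branch_factor n \<omega> k \<sigma> R) \<le> B" if "\<sigma> \<in> sign_vectors n" for \<sigma>
  proof -
    have "norm (branch_factor n \<omega> k \<sigma> R) \<le> norm (- R) + (\<Sum>\<mu><n. norm (root_branch (k \<mu>) (\<omega> \<mu>) R - 0))"
      unfolding branch_factor_def by (rule norm_add_signed_mean_le[OF that assms]) simp
    also have "\<dots> \<le> B"
      unfolding B_def using \<open>norm R \<le> 1\<close> by (intro add_mono sum_mono) (auto intro: norm_root_branch_le)
    finally show ?thesis .
  qed
  have "norm (gfun n \<omega> k R) \<le> e ^ card T * B ^ card (sign_vectors n - T)"
    unfolding gfun_eq_prod_branch_factor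
    using finite_sign_vectors T bounded small by (rule norm_prod_le_subset)
  also have "\<dots> \<le> e ^ card T * B ^ 2 ^ n"
  proof (intro mult_left_mono power_increasing)
    show "card (sign_vectors n - T) \<le> 2 ^ n"
      using card_mono[OF finite_sign_vectors Diff_subset] by (simp add: card_sign_vectors)
  qed (use \<open>1 \<le> B\<close> \<open>0 \<le> e\<close> in auto)
  finally show "norm (gfun n \<omega> k R) \<le> e ^ card T * B ^ 2 ^ n" .
  qed
qed

lemma gfun_norm_le_square_nonzero:
  assumes "n \<ge> 1" "(\<Sum>\<mu><n. \<omega> \<mu>) = 0" "\<And>\<mu>. \<mu> < n \<Longrightarrow> \<omega> \<mu> \<noteq> 0"
  shows "\<exists>C. \<forall>R. norm R \<le> 1 \<longrightarrow> norm (gfun n \<omega> k R) \<le> C * (norm R)\<^sup>2"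
proof -
  define K where "K = (\<Sum>\<mu><n. (k \<mu>)\<^sup>2 / \<bar>\<omega> \<mu>\<bar>)"
  define T where "T = (\<lambda>c. restrict (\<lambda>_. c) {0..<n}) ` {-1, 1 :: real}"
  have "inj_on (\<lambda>c. restrict (\<lambda>_. c) {0..<n}) {-1, 1 :: real}"
    using assms(1) by (intro inj_on_inverseI[where g = "\<lambda>\<sigma>. \<sigma> 0"]) simp
  then have "card T = 2" by (simp add: T_def card_image)
  have "T \<subseteq> sign_vectors n" by (auto simp: T_def sign_vectors_def)
  have "0 \<le> K" unfolding K_def by (intro sum_nonneg) auto
  have small: "norm (branch_factor n \<omega> k \<sigma> R) \<le> (1 + K) * norm R" if "\<sigma> \<in> T" for \<sigma> R
  proof -
    from that obtain c where "\<sigma> = restrict (\<lambda>_. c) {0..<n}" by (auto simp: T_def)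
    then have "norm (branch_factor n \<omega> k \<sigma> R) \<le>
        norm R + (\<Sum>\<mu><n. norm (root_branch (k \<mu>) (\<omega> \<mu>) R - \<i> * of_real (\<omega> \<mu>)))"
      using that \<open>T \<subseteq> sign_vectors n\<close> assms(1,2) by (intro norm_branch_factor_le_balanced) auto
    also have "\<dots> \<le> norm R + (\<Sum>\<mu><n. (k \<mu>)\<^sup>2 / \<bar>\<omega> \<mu>\<bar> * norm R)"
      using assms(3) by (intro add_left_mono sum_mono norm_root_branch_diff_le_linear) auto
    also have "\<dots> = (1 + K) * norm R" by (simp add: K_def sum_distrib_right distrib_right)
    finally show ?thesis .
  qed
  obtain B where B: "\<And>T R e. T \<subseteq> sign_vectors n \<Longrightarrow> norm R \<le> 1 \<Longrightarrow> 0 \<le> e \<Longrightarrow>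
      (\<And>\<sigma>. \<sigma> \<in> T \<Longrightarrow> norm (branch_factor n \<omega> k \<sigma> R) \<le> e) \<Longrightarrow>
      norm (gfun n \<omega> k R) \<le> e ^ card T * B"
    using norm_gfun_le_of_factor_bounds[where \<omega> = \<omega> and k = k, OF assms(1)] by blast
  have "norm (gfun n \<omega> k R) \<le> ((1 + K) ^ 2 * B) * (norm R)\<^sup>2" if "norm R \<le> 1" for R
    using B[OF \<open>T \<subseteq> sign_vectors n\<close> that _ small] \<open>card T = 2\<close> \<open>0 \<le> K\<close>
    by (simp add: power_mult_distrib mult_ac)
  then show ?thesis by blast
qed

lemma gfun_norm_le_square_vanishing:
  assumes "n \<ge> 2" "(\<Sum>\<mu><n. \<omega> \<mu>) = 0" "\<mu>\<^sub>0 < n" "\<omega> \<mu>\<^sub>0 = 0"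
  shows "\<exists>C. \<forall>R. norm R \<le> 1 \<longrightarrow> norm (gfun n \<omega> k R) \<le> C * (norm R)\<^sup>2"
proof -
  obtain \<mu>\<^sub>1 where "\<mu>\<^sub>1 < n" "\<mu>\<^sub>1 \<noteq> \<mu>\<^sub>0"
    using assms(1) by (metis Suc_1 Suc_le_lessD less_2_cases_iff less_le_trans nat_neq_iff)
  define K where "K = (\<Sum>\<mu><n. \<bar>k \<mu>\<bar> + (k \<mu>)\<^sup>2 / \<bar>\<omega> \<mu>\<bar>)"
  define T where "T = (\<lambda>(c, d). (restrict (\<lambda>_. c) {0..<n})(\<mu>\<^sub>0 := d)) ` ({-1, 1 :: real} \<times> {-1, 1})"
  have "inj_on (\<lambda>(c, d). (restrict (\<lambda>_. c) {0..<n})(\<mu>\<^sub>0 := d)) ({-1, 1 :: real} \<times> {-1, 1})"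
    using \<open>\<mu>\<^sub>1 < n\<close> \<open>\<mu>\<^sub>1 \<noteq> \<mu>\<^sub>0\<close>
    by (intro inj_on_inverseI[where g = "\<lambda>\<sigma>. (\<sigma> \<mu>\<^sub>1, \<sigma> \<mu>\<^sub>0)"]) auto
  then have "card T = 4" by (simp add: T_def card_image card_cartesian_product)
  have "T \<subseteq> sign_vectors n" using assms(3) by (auto simp: T_def sign_vectors_def PiE_iff extensional_def)
  have "0 \<le> K" unfolding K_def by (intro sum_nonneg) auto
  have small: "norm (branch_factor n \<omega> k \<sigma> R) \<le> (1 + K) * sqrt (norm R)"
    if "\<sigma> \<in> T" "norm R \<le> 1" for \<sigma> R
  proof -
    have "norm R \<le> sqrt (norm R)"
      using that(2) by (intro real_le_rsqrt) (simp add: power2_eq_square mult_left_le)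
    from that(1) obtain c d where "\<sigma> = (restrict (\<lambda>_. c) {0..<n})(\<mu>\<^sub>0 := d)"
      by (auto simp: T_def)
    then have "norm (branch_factor n \<omega> k \<sigma> R) \<le>
        norm R + (\<Sum>\<mu><n. norm (root_branch (k \<mu>) (\<omega> \<mu>) R - \<i> * of_real (\<omega> \<mu>)))"
      using that(1) \<open>T \<subseteq> sign_vectors n\<close> assms(1,2,4)
      by (intro norm_branch_factor_le_balanced[where c = c]) auto
    also have "\<dots> \<le> sqrt (norm R) + (\<Sum>\<mu><n. (\<bar>k \<mu>\<bar> + (k \<mu>)\<^sup>2 / \<bar>\<omega> \<mu>\<bar>) * sqrt (norm R))"
    proof (intro add_mono sum_mono \<open>norm R \<le> sqrt (norm R)\<close>)
      fix \<mu>
      have "(k \<mu>)\<^sup>2 / \<bar>\<omega> \<mu>\<bar> * norm R \<le> (k \<mu>)\<^sup>2 / \<bar>\<omega> \<mu>\<bar> * sqrt (norm R)"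
        using \<open>norm R \<le> sqrt (norm R)\<close> by (intro mult_left_mono) auto
      then show "norm (root_branch (k \<mu>) (\<omega> \<mu>) R - \<i> * of_real (\<omega> \<mu>)) \<le>
          (\<bar>k \<mu>\<bar> + (k \<mu>)\<^sup>2 / \<bar>\<omega> \<mu>\<bar>) * sqrt (norm R)"
        using norm_root_branch_diff_le[of "k \<mu>" "\<omega> \<mu>" R] by (simp add: algebra_simps)
    qed
    also have "\<dots> = (1 + K) * sqrt (norm R)" by (simp add: K_def sum_distrib_right distrib_right)
    finally show ?thesis .
  qed
  obtain B where B: "\<And>T R e. T \<subseteq> sign_vectors n \<Longrightarrow> norm R \<le> 1 \<Longrightarrow> 0 \<le> e \<Longrightarrow>
      (\<And>\<sigma>. \<sigma> \<in> T \<Longrightarrow> norm (branch_factor n \<omega> k \<sigma> R) \<le> e) \<Longrightarrow>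
      norm (gfun n \<omega> k R) \<le> e ^ card T * B"
    using norm_gfun_le_of_factor_bounds[where \<omega> = \<omega> and k = k, of n] assms(1) by fastforce
  have "norm (gfun n \<omega> k R) \<le> ((1 + K) ^ 4 * B) * (norm R)\<^sup>2" if "norm R \<le> 1" for R
  proof -
    have "sqrt (norm R) ^ 4 = (norm R)\<^sup>2"
      by (metis norm_ge_zero numeral_Bit0 power_add power2_eq_square real_sqrt_pow2)
    moreover have "norm (gfun n \<omega> k R) \<le> ((1 + K) * sqrt (norm R)) ^ card T * B"
      using \<open>T \<subseteq> sign_vectors n\<close> that \<open>0 \<le> K\<close> small[OF _ that] by (intro B) auto
    ultimately show ?thesis using \<open>card T = 4\<close> by (simp add: power_mult_distrib mult_ac)
  qed
  then show ?thesis by blast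
qed

lemma gfun_norm_le_square:
  assumes "n \<ge> 2" "(\<Sum>\<mu><n. \<omega> \<mu>) = 0"
  shows "\<exists>C. \<forall>R. norm R \<le> 1 \<longrightarrow> norm (gfun n \<omega> k R) \<le> C * (norm R)\<^sup>2"
proof (cases "\<forall>\<mu><n. \<omega> \<mu> \<noteq> 0")
  case True
  then show ?thesis using assms by (intro gfun_norm_le_square_nonzero) auto
next
  case False
  then show ?thesis using assms gfun_norm_le_square_vanishing by blast
qed

theorem proposition3:
  fixes n :: nat and \<omega> k :: "nat \<Rightarrow> real"
  assumes "n \<ge> 2"
    and "\<And>\<mu>. \<mu> < n \<Longrightarrow> k \<mu> > 0"
    and IC1: "(\<Sum>\<mu><n. \<omega> \<mu>) = 0"
    and IC2: "\<exists>\<mu><n. \<omega> \<mu> \<noteq> 0"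
    and IC3: "\<And>i j. i \<le> j \<Longrightarrow> j < n \<Longrightarrow> \<bar>\<omega> i / k i\<bar> \<le> \<bar>\<omega> j / k j\<bar>"
  shows "\<exists>p :: complex poly. degree p = 2 ^ n \<and> (\<forall>R. gfun n \<omega> k R = poly p R) \<and>
           (\<exists>h :: complex poly. degree h = 2 ^ n - 2 \<and> (\<forall>R. gfun n \<omega> k R = R\<^sup>2 * poly h R))"
proof -
  obtain p where p: "\<And>R. gfun n \<omega> k R = poly p R"
    using gfun_polynomial by blast
  have deg: "degree p = 2 ^ n"
    using gfun_asymptotics[of n \<omega> k] \<open>n \<ge> 2\<close> by (intro degree_eq_of_tendsto[of _ _ 1]) (simp_all add: p)
  obtain C where "\<And>R. norm R \<le> 1 \<Longrightarrow> norm (poly p R) \<le> C * norm R ^ 2"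
    using gfun_norm_le_square[OF \<open>n \<ge> 2\<close> IC1, of k] by (auto simp: p)
  then have "[:0, 1:] ^ 2 dvd p"
    by (intro monom_power_dvd_of_norm_bound) auto
  then obtain h where h: "p = [:0, 1:] ^ 2 * h" by (elim dvdE)
  with deg have "degree h = 2 ^ n - 2"
    by (cases "h = 0") (simp_all add: degree_mult_eq degree_linear_power)
  moreover have "gfun n \<omega> k R = R\<^sup>2 * poly h R" for R
    by (simp add: p h)
  ultimately show ?thesis using deg p by blast
qed

end
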